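(* Let $x\in\mathbb R$, $A,B\in\frac12\mathbb Z$ with $A\equiv B\bmod 1$. Then $$p(a,b,x)=\frac{\Gamma(A+a-x)\,\Gamma(B+b-x)}{\Gamma(A+a+x)\,\Gamma(B+b+x)}>0\quad\text{for all }a,b\in\mathbb Z_{\ge0}$$ if and only if either $A,B\in\mathbb Z_{\ge1}$ and $|x|<\min(A,B)$, or $A,B\in\frac12+\mathbb Z$ and $|x|<\max\bigl(\frac12,\min(A,B)\bigr)$. *)

theory Defs
  imports "HOL-Analysis.Analysis"
begin

text \<open>Isabelle's real Gamma function takes the
value 0 at its poles (the non-positive integers), so p is 0 whenever any of the four
Gamma factors sits at a pole; in particular p > 0 then fails.\<close>
definition p_ratio :: "real \<Rightarrow> real \<Rightarrow> nat \<Rightarrow> nat \<Rightarrow> real \<Rightarrow> real" where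
  "p_ratio A B a b x =
     (Gamma (A + real a - x) * Gamma (B + real b - x)) /
     (Gamma (A + real a + x) * Gamma (B + real b + x))"

end

theory Submission
  imports Defs
begin

text \<open>The quotient factors as \<open>Gamma_ratio (A + a) x * Gamma_ratio (B + b) x\<close>, and each
factor is positive for large shifts, so the condition splits into one condition per factor.
Gamma is positive on \<open>(0, \<infinity>)\<close>, negative on \<open>(-1, 0)\<close> and of constant sign on every
interval \<open>(n, n + 1)\<close>. Hence \<open>Gamma (c - x) / Gamma (c + x) > 0\<close> when \<open>\<bar>x\<bar> < c\<close>, and also
when \<open>c\<close> is a half-integer and \<open>\<bar>x\<bar> < 1/2\<close>, since then \<open>c \<plusminus> x\<close> lie in one such interval.
Conversely, if \<open>\<bar>x\<bar> \<ge> c\<close>, the shift \<open>a = \<lfloor>\<bar>x\<bar> - c\<rfloor>\<close> puts \<open>c + a - \<bar>x\<bar>\<close> into \<open>(-1, 0]\<close>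
while \<open>c + a + \<bar>x\<bar> > 0\<close> as soon as \<open>\<bar>x\<bar> \<ge> 1/2\<close> or \<open>c\<close> is an integer, so the ratio is
not positive.\<close>

lemma Gamma_mult_pos_same_unit_interval:
  fixes s t :: real
  assumes "of_int n < s" "s < of_int n + 1" "of_int n < t" "t < of_int n + 1"
  shows "Gamma s * Gamma t > 0"
proof (cases "n \<ge> 0")
  case True
  with assms have "s > 0" "t > 0" by linarith+
  then show ?thesis by simp
next
  case False
  txt \<open>Shift both arguments by \<open>k = -n\<close> into \<open>(0, 1)\<close>: \<open>Gamma (u + k) = pochhammer u k * Gamma u\<close>,
    and the two Pochhammer products consist of \<open>k\<close> negative factors each.\<close>
  define k where "k = nat (- n)"
  have k: "real k = - of_int n" using False unfolding k_def by simp
  have shifted_pos: "Gamma (s + of_nat k) > 0" "Gamma (t + of_nat k) > 0"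
    using assms k by simp_all
  have factors_neg: "u + of_nat i < 0" if "u < of_int n + 1" "i < k" for u :: real and i
    using that k by linarith
  have "pochhammer s k * pochhammer t k = (\<Prod>i<k. (s + of_nat i) * (t + of_nat i))"
    by (simp add: pochhammer_prod atLeast0LessThan prod.distrib)
  also have "\<dots> > 0"
    using assms factors_neg by (intro prod_pos) (auto intro: mult_neg_neg)
  finally have poch_pos: "pochhammer s k * pochhammer t k > 0" .
  have not_pole: "u \<notin> \<int>\<^sub>\<le>\<^sub>0" if "of_int n < u" "u < of_int n + 1" for u :: real
  proof
    assume "u \<in> \<int>\<^sub>\<le>\<^sub>0"
    then obtain m where "u = of_int m" by (auto elim: nonpos_Ints_cases)
    with that show False by simp
  qed
  have "Gamma s * Gamma t * (pochhammer s k * pochhammer t k) =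
        Gamma (s + of_nat k) * Gamma (t + of_nat k)"
    using assms poch_pos
    by (simp add: pochhammer_Gamma not_pole Gamma_eq_zero_iff field_simps)
  with shifted_pos poch_pos show ?thesis
    by (metis mult_pos_pos zero_less_mult_pos2)
qed

lemma Gamma_neg_between_minus_one_zero:
  fixes t :: real
  assumes "-1 < t" "t < 0"
  shows "Gamma t < 0"
proof -
  have "t \<notin> \<int>\<^sub>\<le>\<^sub>0"
    using assms by (auto elim!: nonpos_Ints_cases)
  then have "Gamma (t + 1) = t * Gamma t" by (rule Gamma_plus1)
  moreover have "Gamma (t + 1) > 0" using assms by simp
  ultimately show ?thesis using assms by (simp add: zero_less_mult_iff)
qed

definition Gamma_ratio :: "real \<Rightarrow> real \<Rightarrow> real" where
  "Gamma_ratio c x = Gamma (c - x) / Gamma (c + x)"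

lemma p_ratio_eq_mult_Gamma_ratio:
  "p_ratio A B a b x = Gamma_ratio (A + real a) x * Gamma_ratio (B + real b) x"
  by (simp add: p_ratio_def Gamma_ratio_def)

lemma Gamma_ratio_pos_abs_iff: "Gamma_ratio c \<bar>x\<bar> > 0 \<longleftrightarrow> Gamma_ratio c x > 0"
  by (cases "x \<ge> 0") (auto simp: Gamma_ratio_def zero_less_divide_iff)

lemma Gamma_ratio_pos_if_abs_less: "\<bar>x\<bar> < c \<Longrightarrow> Gamma_ratio c x > 0"
  by (simp add: Gamma_ratio_def)

lemma Gamma_ratio_pos_half_int:
  assumes "c - 1/2 \<in> \<int>" "\<bar>x\<bar> < 1/2"
  shows "Gamma_ratio c x > 0"
proof -
  obtain m where "c - 1/2 = of_int m" using assms(1) by (auto elim: Ints_cases)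
  then have "Gamma (c - x) * Gamma (c + x) > 0"
    using assms(2) by (intro Gamma_mult_pos_same_unit_interval[of m]) auto
  then show ?thesis by (simp add: Gamma_ratio_def zero_less_mult_iff zero_less_divide_iff)
qed

lemma Gamma_ratio_ex_pos_shift: "\<exists>a::nat. Gamma_ratio (c + real a) x > 0"
proof
  show "Gamma_ratio (c + real (nat \<lceil>\<bar>x\<bar> - c\<rceil> + 1)) x > 0"
    by (rule Gamma_ratio_pos_if_abs_less) linarith
qed

lemma Gamma_ratio_floor_shift_nonpos:
  fixes c y :: real
  assumes "c \<le> y" and "1/2 \<le> y \<or> (c \<in> \<int> \<and> 0 \<le> y)"
  shows "Gamma_ratio (c + real (nat \<lfloor>y - c\<rfloor>)) y \<le> 0"
proof -
  define d where "d = c + real (nat \<lfloor>y - c\<rfloor>)"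
  have d: "-1 < d - y" "d - y \<le> 0"
    using assms(1) unfolding d_def by linarith+
  show ?thesis
    unfolding d_def [symmetric]
  proof (cases "d = y")
    case True
    \<comment> \<open>pole of the numerator, where \<open>Gamma\<close> is \<open>0\<close> in Isabelle\<close>
    then show "Gamma_ratio d y \<le> 0" by (simp add: Gamma_ratio_def)
  next
    case False
    with d have "Gamma (d - y) < 0"
      by (intro Gamma_neg_between_minus_one_zero) auto
    moreover have "d + y > 0"
      using assms(2)
    proof
      assume "c \<in> \<int> \<and> 0 \<le> y"
      then have "d \<in> \<int>" "0 \<le> y" unfolding d_def by auto
      then obtain k where k: "d = of_int k" "0 \<le> y" by (auto elim!: Ints_cases)
      with d have "k \<ge> 0" by simp
      with k d False show "d + y > 0" by simp
    qed (use d False in linarith)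
    ultimately show "Gamma_ratio d y \<le> 0"
      by (simp add: Gamma_ratio_def divide_neg_pos less_imp_le)
  qed
qed

lemma all_Gamma_ratio_shifts_pos_iff_int:
  assumes "c \<in> \<int>"
  shows "(\<forall>a::nat. Gamma_ratio (c + real a) x > 0) \<longleftrightarrow> 1 \<le> c \<and> \<bar>x\<bar> < c"
proof
  assume pos: "\<forall>a::nat. Gamma_ratio (c + real a) x > 0"
  have "\<bar>x\<bar> < c"
  proof (rule ccontr)
    assume "\<not> \<bar>x\<bar> < c"
    then have "Gamma_ratio (c + real (nat \<lfloor>\<bar>x\<bar> - c\<rfloor>)) \<bar>x\<bar> \<le> 0"
      using assms by (intro Gamma_ratio_floor_shift_nonpos) auto
    with pos show False by (simp add: Gamma_ratio_pos_abs_iff not_less [symmetric])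
  qed
  moreover from assms obtain k where "c = of_int k" by (auto elim: Ints_cases)
  ultimately show "1 \<le> c \<and> \<bar>x\<bar> < c" by simp
qed (auto intro: Gamma_ratio_pos_if_abs_less)

lemma all_Gamma_ratio_shifts_pos_iff_half_int:
  assumes "c - 1/2 \<in> \<int>"
  shows "(\<forall>a::nat. Gamma_ratio (c + real a) x > 0) \<longleftrightarrow> \<bar>x\<bar> < max (1/2) c"
proof
  assume pos: "\<forall>a::nat. Gamma_ratio (c + real a) x > 0"
  show "\<bar>x\<bar> < max (1/2) c"
  proof (rule ccontr)
    assume "\<not> \<bar>x\<bar> < max (1/2) c"
    then have "Gamma_ratio (c + real (nat \<lfloor>\<bar>x\<bar> - c\<rfloor>)) \<bar>x\<bar> \<le> 0"
      by (intro Gamma_ratio_floor_shift_nonpos) auto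
    with pos show False by (simp add: Gamma_ratio_pos_abs_iff not_less [symmetric])
  qed
next
  assume x: "\<bar>x\<bar> < max (1/2) c"
  show "\<forall>a::nat. Gamma_ratio (c + real a) x > 0"
  proof
    fix a :: nat
    show "Gamma_ratio (c + real a) x > 0"
    proof (cases "\<bar>x\<bar> < 1/2")
      case True
      have "(c - 1/2) + real a \<in> \<int>" using assms by simp
      with True show ?thesis
        by (intro Gamma_ratio_pos_half_int) (simp_all add: algebra_simps)
    next
      case False
      with x show ?thesis by (intro Gamma_ratio_pos_if_abs_less) auto
    qed
  qed
qed

lemma all_mult_pos_iff:
  fixes f :: "'a \<Rightarrow> 'c::linordered_ring_strict" and g :: "'b \<Rightarrow> 'c"
  assumes "f a\<^sub>0 > 0" "g b\<^sub>0 > 0"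
  shows "(\<forall>a b. f a * g b > 0) \<longleftrightarrow> (\<forall>a. f a > 0) \<and> (\<forall>b. g b > 0)"
  using assms by (metis mult_pos_pos zero_less_mult_pos zero_less_mult_pos2)

lemma Ints_or_half_Ints:
  fixes c :: real
  assumes "2 * c \<in> \<int>"
  shows "c \<in> \<int> \<or> c - 1/2 \<in> \<int>"
proof -
  obtain k where k: "2 * c = of_int k" using assms by (auto elim: Ints_cases)
  show ?thesis
  proof (cases "even k")
    case True
    then obtain j where "k = 2 * j" by auto
    with k have "c = of_int j" by simp
    then show ?thesis by simp
  next
    case False
    then obtain j where "k = 2 * j + 1" by (auto elim: oddE)
    with k have "c - 1/2 = of_int j" by simp
    then show ?thesis by simp
  qed
qed

lemma half_Ints_not_Ints:
  fixes c :: real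
  assumes "c - 1/2 \<in> \<int>"
  shows "c \<notin> \<int>"
proof
  assume "c \<in> \<int>"
  from this assms have "c - (c - 1/2) \<in> \<int>" by (rule Ints_diff)
  moreover have "(of_int 1 / of_int 2 :: real) \<notin> \<int>"
    by (intro fraction_not_in_Ints) auto
  ultimately show False by simp
qed

theorem lemma15p4:
  fixes x A B :: real
  assumes "2 * A \<in> \<int>" and "2 * B \<in> \<int>" and "A - B \<in> \<int>"
  shows "(\<forall>a b :: nat. p_ratio A B a b x > 0) \<longleftrightarrow>
           ((A \<in> \<int> \<and> A \<ge> 1 \<and> B \<in> \<int> \<and> B \<ge> 1 \<and> \<bar>x\<bar> < min A B) \<or>
            (A - 1/2 \<in> \<int> \<and> B - 1/2 \<in> \<int> \<and> \<bar>x\<bar> < max (1/2) (min A B)))"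
proof -
  obtain a\<^sub>0 b\<^sub>0 :: nat where "Gamma_ratio (A + real a\<^sub>0) x > 0" "Gamma_ratio (B + real b\<^sub>0) x > 0"
    using Gamma_ratio_ex_pos_shift by blast
  then have split: "(\<forall>a b :: nat. p_ratio A B a b x > 0) \<longleftrightarrow>
      (\<forall>a::nat. Gamma_ratio (A + real a) x > 0) \<and> (\<forall>b::nat. Gamma_ratio (B + real b) x > 0)"
    unfolding p_ratio_eq_mult_Gamma_ratio by (rule all_mult_pos_iff)
  have "B = A - (A - B)" "B - 1/2 = (A - 1/2) - (A - B)" by simp_all
  then have same_class: "A \<in> \<int> \<Longrightarrow> B \<in> \<int>" "A - 1/2 \<in> \<int> \<Longrightarrow> B - 1/2 \<in> \<int>"
    using assms(3) by (metis Ints_diff)+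
  from Ints_or_half_Ints [OF assms(1)] show ?thesis
  proof
    assume A: "A \<in> \<int>"
    with same_class have "B \<in> \<int>" "A - 1/2 \<notin> \<int>"
      by (auto dest: half_Ints_not_Ints)
    with A show ?thesis
      unfolding split by (simp add: all_Gamma_ratio_shifts_pos_iff_int) blast
  next
    assume A: "A - 1/2 \<in> \<int>"
    with same_class have "B - 1/2 \<in> \<int>" "A \<notin> \<int>"
      by (auto dest: half_Ints_not_Ints)
    with A show ?thesis
      unfolding split by (simp add: all_Gamma_ratio_shifts_pos_iff_half_int less_max_iff_disj) linarith
  qed
qed

end
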